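(* Let $K$ be a field, $A\subset K$ and $B\subset K$ finite sets with $|A|=m$, $|B|=n$. Let $0\le p\le m$, $0\le q\le n$, set $d:=p+q$ and assume $d\le\min\{m-1,n-1\}$. Then $$\operatorname{Syl}_{p,q}(A,B)=(-1)^{p(m-d)}\binom{d}{p}\operatorname{Syl}_{0,d}(A,B).$$
   Context: For finite sets $Y,Z$, $\mathcal{R}(Y,Z):=\prod_{y\in Y,z\in Z}(y-z)$ (equal to $1$ if $Y$ or $Z$ is empty), and $\mathcal{R}(x,Z):=\mathcal{R}(\{x\},Z)$. For $0\le p\le m$, $0\le q\le n$, $$\operatorname{Syl}_{p,q}(A,B)(x):=\sum_{\substack{A'\subset A,\ B'\subset B\\ |A'|=p,\ |B'|=q}}\mathcal{R}(A',B')\,\mathcal{R}(A\setminus A',B\setminus B')\,\frac{\mathcal{R}(x,A')\,\mathcal{R}(x,B')}{\mathcal{R}(A',A\setminus A')\,\mathcal{R}(B',B\setminus B')}.$$ *)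

theory Defs
  imports "HOL-Computational_Algebra.Polynomial"
begin

definition Res :: "'a::field set \<Rightarrow> 'a set \<Rightarrow> 'a" where
  "Res Y Z = (\<Prod>y\<in>Y. \<Prod>z\<in>Z. (y - z))"

definition ResX :: "'a::field set \<Rightarrow> 'a poly" where
  "ResX Z = (\<Prod>z\<in>Z. [:- z, 1:])"

definition Syl :: "nat \<Rightarrow> nat \<Rightarrow> 'a::field set \<Rightarrow> 'a set \<Rightarrow> 'a poly" where
  "Syl p q A B = (\<Sum>A'\<in>{A'. A' \<subseteq> A \<and> card A' = p}. \<Sum>B'\<in>{B'. B' \<subseteq> B \<and> card B' = q}.
     smult (Res A' B' * Res (A - A') (B - B') / (Res A' (A - A') * Res B' (B - B')))
           (ResX A' * ResX B'))"

end

theory Submission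
  imports Defs
begin

text \<open>
  Both sides are polynomials of degree at most \<open>d = p + q\<close>. At a point \<open>b \<in> B\<close> every
  summand with \<open>b \<in> B'\<close> vanishes, and what remains is \<open>(-1)^d R(A,b)\<close> times the top
  coefficient of \<open>Syl p q A (B - {b})\<close>. As \<open>|B| > d\<close>, the identity thus follows from the
  same identity between top coefficients for the sets \<open>B - {b}\<close>, and repeating the
  argument reduces it to \<open>|B| = d\<close>. There one evaluates at the points \<open>a \<in> A\<close> instead:
  for \<open>|A| > d\<close> this shows \<open>Syl p q A B = c R(x,B)\<close>, so an induction on \<open>|A|\<close> ends at
  \<open>|A| = |B| = d\<close>. In that case the interpolation identity
  \<open>\<Sum>B'. R(A1,B') R(A2,B - B') / R(B',B - B') = R(A1,A2)\<close> for \<open>|A1| + |A2| = |B|\<close>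
  makes each of the \<open>d choose p\<close> inner sums equal to one.
\<close>

abbreviation ksubsets :: "nat \<Rightarrow> 'a set \<Rightarrow> 'a set set" where
  "ksubsets k X \<equiv> {Y. Y \<subseteq> X \<and> card Y = k}"

lemma finite_ksubsets: "finite X \<Longrightarrow> finite (ksubsets k X)"
  by (rule finite_subset[of _ "Pow X"]) auto

lemma sum_ksubsets_avoiding:
  assumes "finite X" "\<And>Y. Y \<in> ksubsets k X \<Longrightarrow> x \<in> Y \<Longrightarrow> g Y = 0"
  shows "(\<Sum>Y\<in>ksubsets k X. g Y) = (\<Sum>Y\<in>ksubsets k (X - {x}). g Y)"
  by (rule sum.mono_neutral_right) (use assms in \<open>auto simp: finite_ksubsets\<close>)

lemma insert_image_ksubsets:
  assumes "finite X" "x \<in> X"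
  shows "insert x ` ksubsets k (X - {x}) = {Y \<in> ksubsets (Suc k) X. x \<in> Y}"
proof (intro equalityI subsetI)
  fix Y assume "Y \<in> insert x ` ksubsets k (X - {x})"
  then obtain Y' where "Y = insert x Y'" "Y' \<subseteq> X - {x}" "card Y' = k" by blast
  moreover from this have "finite Y'" using assms(1) by (blast intro: finite_subset)
  ultimately show "Y \<in> {Y \<in> ksubsets (Suc k) X. x \<in> Y}"
    using assms(2) by (auto simp: card_insert_if)
next
  fix Y assume Y: "Y \<in> {Y \<in> ksubsets (Suc k) X. x \<in> Y}"
  then have "Y = insert x (Y - {x})" "Y - {x} \<in> ksubsets k (X - {x})"
    using assms by (auto dest: finite_subset)
  then show "Y \<in> insert x ` ksubsets k (X - {x})" by blast
qed

lemma sum_ksubsets_containing: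
  assumes "finite X" "x \<in> X" "\<And>Y. Y \<in> ksubsets (Suc k) X \<Longrightarrow> x \<notin> Y \<Longrightarrow> g Y = 0"
  shows "(\<Sum>Y\<in>ksubsets (Suc k) X. g Y) = (\<Sum>Y\<in>ksubsets k (X - {x}). g (insert x Y))"
proof -
  have "(\<Sum>Y\<in>ksubsets (Suc k) X. g Y) = (\<Sum>Y\<in>insert x ` ksubsets k (X - {x}). g Y)"
    unfolding insert_image_ksubsets[OF assms(1,2)]
    by (rule sum.mono_neutral_right) (use assms in \<open>auto simp: finite_ksubsets\<close>)
  also have "\<dots> = (\<Sum>Y\<in>ksubsets k (X - {x}). g (insert x Y))"
    by (rule sum.reindex_cong[where l = "insert x"]) (auto simp: inj_on_def)
  finally show ?thesis .
qed

lemma Res_nonzero: "finite Y \<Longrightarrow> finite Z \<Longrightarrow> Y \<inter> Z = {} \<Longrightarrow> Res Y Z \<noteq> 0"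
  unfolding Res_def by (auto simp: prod_zero_iff)

lemma Res_insert_left: "finite Y \<Longrightarrow> a \<notin> Y \<Longrightarrow> Res (insert a Y) Z = (\<Prod>z\<in>Z. a - z) * Res Y Z"
  unfolding Res_def by simp

lemma Res_insert_right: "finite Z \<Longrightarrow> b \<notin> Z \<Longrightarrow> Res Y (insert b Z) = Res Y Z * (\<Prod>y\<in>Y. y - b)"
  unfolding Res_def by (simp add: prod.distrib mult.commute)

lemma poly_ResX: "poly (ResX Z) x = (\<Prod>z\<in>Z. x - z)"
  by (simp add: ResX_def poly_prod)

lemma poly_ResX_swap: "poly (ResX Z) x = (-1) ^ card Z * (\<Prod>z\<in>Z. z - x)"
  by (simp add: poly_ResX flip: prod_uminus)

lemma poly_ResX_eq_0_iff: "finite Z \<Longrightarrow> poly (ResX Z) x = 0 \<longleftrightarrow> x \<in> Z"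
  by (simp add: poly_ResX prod_zero_iff)

lemma ResX_nonzero: "ResX Z \<noteq> 0"
  unfolding ResX_def by (cases "finite Z") auto

lemma degree_ResX: "degree (ResX Z) = card Z"
  unfolding ResX_def by (cases "finite Z") (simp_all add: degree_prod_sum_eq)

lemma lead_coeff_ResX: "lead_coeff (ResX Z) = 1"
  unfolding ResX_def by (simp add: lead_coeff_prod)

lemma coeff_ResX_card: "finite Z \<Longrightarrow> coeff (ResX Z) (card Z) = 1"
  using lead_coeff_ResX[of Z] by (simp add: degree_ResX)

lemma coeff_ResX_mult_top:
  "finite Y \<Longrightarrow> finite Z \<Longrightarrow> coeff (ResX Y * ResX Z) (card Y + card Z) = 1"
  using lead_coeff_mult[of "ResX Y" "ResX Z"]
  by (simp add: degree_mult_eq ResX_nonzero degree_ResX coeff_ResX_card)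

definition Syl_weight :: "'a::field set \<Rightarrow> 'a set \<Rightarrow> 'a set \<Rightarrow> 'a set \<Rightarrow> 'a" where
  "Syl_weight A B A' B' = Res A' B' * Res (A - A') (B - B') / (Res A' (A - A') * Res B' (B - B'))"

lemma Syl_sum_weight: "Syl p q A B =
   (\<Sum>A'\<in>ksubsets p A. \<Sum>B'\<in>ksubsets q B. smult (Syl_weight A B A' B') (ResX A' * ResX B'))"
  by (simp add: Syl_def Syl_weight_def)

definition Syl_lead :: "nat \<Rightarrow> nat \<Rightarrow> 'a::field set \<Rightarrow> 'a set \<Rightarrow> 'a" where
  "Syl_lead p q A B = (\<Sum>A'\<in>ksubsets p A. \<Sum>B'\<in>ksubsets q B. Syl_weight A B A' B')"

lemma degree_Syl_le:
  assumes "finite A" "finite B"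
  shows "degree (Syl p q A B) \<le> p + q"
proof -
  have "degree (smult c (ResX A' * ResX B')) \<le> p + q"
    if "A' \<in> ksubsets p A" "B' \<in> ksubsets q B" for c and A' B' :: "'a set"
    using that finite_subset[OF _ assms(1)] finite_subset[OF _ assms(2)]
    by (auto intro!: order.trans[OF degree_smult_le] order.trans[OF degree_mult_le]
        simp: degree_ResX)
  then show ?thesis
    unfolding Syl_sum_weight by (auto intro!: degree_sum_le simp: finite_ksubsets assms)
qed

lemma coeff_Syl_top:
  assumes "finite A" "finite B"
  shows "coeff (Syl p q A B) (p + q) = Syl_lead p q A B"
  unfolding Syl_sum_weight Syl_lead_def coeff_sum coeff_smult
  using finite_subset[OF _ assms(1)] finite_subset[OF _ assms(2)]
  by (intro sum.cong refl) (auto simp: coeff_ResX_mult_top)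

lemma Syl_weight_at_right_point:
  assumes "finite A" "finite B" "b \<in> B" "A' \<subseteq> A" "B' \<subseteq> B - {b}"
  shows "Syl_weight A B A' B' * (poly (ResX A') b * poly (ResX B') b)
       = (-1) ^ (card A' + card B') * (\<Prod>a\<in>A. a - b) * Syl_weight A (B - {b}) A' B'"
proof -
  have fin: "finite A'" "finite B'"
    using assms by (auto intro: finite_subset)
  have B_split: "B - B' = insert b (B - {b} - B')"
    using assms by auto
  have "Res (A - A') (B - B') = Res (A - A') (B - {b} - B') * (\<Prod>a\<in>A - A'. a - b)"
   and "Res B' (B - B') = Res B' (B - {b} - B') * (\<Prod>y\<in>B'. y - b)"
    unfolding B_split using assms by (auto intro: Res_insert_right)
  moreover have "(\<Prod>a\<in>A. a - b) = (\<Prod>a\<in>A - A'. a - b) * (\<Prod>a\<in>A'. a - b)"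
    using assms by (intro prod.subset_diff) auto
  moreover have "Res A' (A - A') \<noteq> 0" "Res B' (B - {b} - B') \<noteq> 0"
    using assms fin by (simp_all add: Res_nonzero)
  moreover have "(\<Prod>y\<in>B'. y - b) \<noteq> 0"
    using assms fin by (auto simp: prod_zero_iff)
  ultimately show ?thesis
    unfolding Syl_weight_def poly_ResX_swap power_add by (simp add: field_simps)
qed

lemma Syl_weight_at_left_point:
  assumes "finite A" "finite B" "a \<in> A" "A' \<subseteq> A - {a}" "B' \<subseteq> B"
  shows "Syl_weight A B A' B' * (poly (ResX A') a * poly (ResX B') a)
       = (-1) ^ card A' * (\<Prod>b\<in>B. a - b) * Syl_weight (A - {a}) B A' B'"
proof -
  have fin: "finite A'" "finite B'"
    using assms by (auto intro: finite_subset)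
  have A_split: "A - A' = insert a (A - {a} - A')"
    using assms by auto
  have "Res (A - A') (B - B') = (\<Prod>b\<in>B - B'. a - b) * Res (A - {a} - A') (B - B')"
   and "Res A' (A - A') = Res A' (A - {a} - A') * (\<Prod>y\<in>A'. y - a)"
    unfolding A_split using assms by (auto intro: Res_insert_left Res_insert_right)
  moreover have "(\<Prod>b\<in>B. a - b) = (\<Prod>b\<in>B - B'. a - b) * (\<Prod>b\<in>B'. a - b)"
    using assms by (intro prod.subset_diff) auto
  moreover have "Res A' (A - {a} - A') \<noteq> 0" "Res B' (B - B') \<noteq> 0"
    using assms fin by (simp_all add: Res_nonzero)
  moreover have "(\<Prod>y\<in>A'. y - a) \<noteq> 0"
    using assms fin by (auto simp: prod_zero_iff)
  ultimately show ?thesis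
    unfolding Syl_weight_def poly_ResX_swap[of A'] by (simp add: poly_ResX field_simps)
qed

lemma poly_Syl_at_right_point:
  assumes "finite A" "finite B" "b \<in> B"
  shows "poly (Syl p q A B) b = (-1) ^ (p + q) * (\<Prod>a\<in>A. a - b) * Syl_lead p q A (B - {b})"
proof -
  have "poly (Syl p q A B) b = (\<Sum>A'\<in>ksubsets p A. \<Sum>B'\<in>ksubsets q B.
      Syl_weight A B A' B' * (poly (ResX A') b * poly (ResX B') b))"
    by (simp add: Syl_sum_weight poly_sum)
  also have "\<dots> = (\<Sum>A'\<in>ksubsets p A. \<Sum>B'\<in>ksubsets q (B - {b}).
      Syl_weight A B A' B' * (poly (ResX A') b * poly (ResX B') b))"
    using finite_subset[OF _ assms(2)]
    by (intro sum.cong refl sum_ksubsets_avoiding assms) (auto simp: poly_ResX_eq_0_iff)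
  also have "\<dots> = (\<Sum>A'\<in>ksubsets p A. \<Sum>B'\<in>ksubsets q (B - {b}).
      (-1) ^ (p + q) * (\<Prod>a\<in>A. a - b) * Syl_weight A (B - {b}) A' B')"
    using assms by (intro sum.cong refl) (auto simp: Syl_weight_at_right_point)
  finally show ?thesis
    by (simp add: Syl_lead_def sum_distrib_left)
qed

lemma poly_Syl_at_left_point:
  assumes "finite A" "finite B" "a \<in> A"
  shows "poly (Syl p q A B) a = (-1) ^ p * (\<Prod>b\<in>B. a - b) * Syl_lead p q (A - {a}) B"
proof -
  have "poly (Syl p q A B) a = (\<Sum>A'\<in>ksubsets p A. \<Sum>B'\<in>ksubsets q B.
      Syl_weight A B A' B' * (poly (ResX A') a * poly (ResX B') a))"
    by (simp add: Syl_sum_weight poly_sum)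
  also have "\<dots> = (\<Sum>A'\<in>ksubsets p (A - {a}). \<Sum>B'\<in>ksubsets q B.
      Syl_weight A B A' B' * (poly (ResX A') a * poly (ResX B') a))"
    using finite_subset[OF _ assms(1)]
    by (intro sum_ksubsets_avoiding assms) (auto intro!: sum.neutral simp: poly_ResX_eq_0_iff)
  also have "\<dots> = (\<Sum>A'\<in>ksubsets p (A - {a}). \<Sum>B'\<in>ksubsets q B.
      (-1) ^ p * (\<Prod>b\<in>B. a - b) * Syl_weight (A - {a}) B A' B')"
    using assms by (intro sum.cong refl) (auto simp: Syl_weight_at_left_point)
  finally show ?thesis
    by (simp add: Syl_lead_def sum_distrib_left)
qed

lemma Res_interpolation_summand:
  assumes "finite B" "b \<in> B" "B' \<subseteq> B - {b}"
  shows "Res A1 (insert b B') * Res A0 (B - insert b B') / Res (insert b B') (B - insert b B')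
           * poly (ResX (B - insert b B')) b
       = (\<Prod>a\<in>A1. a - b) * (Res A1 B' * Res A0 (B - {b} - B') / Res B' (B - {b} - B'))"
proof -
  have fin: "finite B'" "b \<notin> B'"
    using assms by (auto intro: finite_subset)
  have B_rest: "B - insert b B' = B - {b} - B'"
    by auto
  have "Res A1 (insert b B') = Res A1 B' * (\<Prod>a\<in>A1. a - b)"
    using fin by (rule Res_insert_right)
  moreover have "Res (insert b B') (B - {b} - B') = poly (ResX (B - {b} - B')) b * Res B' (B - {b} - B')"
    using fin by (simp add: Res_insert_left poly_ResX)
  moreover have "poly (ResX (B - {b} - B')) b \<noteq> 0" "Res B' (B - {b} - B') \<noteq> 0"
    using assms fin by (simp_all add: poly_ResX_eq_0_iff Res_nonzero)
  ultimately show ?thesis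
    unfolding B_rest by (simp add: field_simps)
qed

lemma sum_ksubsets_Res_interpolation:
  assumes "finite B" "card B = card A1 + q" "finite A2" "card A2 = q"
  shows "(\<Sum>B'\<in>ksubsets q B. Res A1 B' * Res A2 (B - B') / Res B' (B - B')) = Res A1 A2"
  using assms
proof (induction q arbitrary: A2 B)
  case 0
  then have "ksubsets 0 B = {{}}"
    using finite_subset[OF _ "0"(1)] by fastforce
  with 0 show ?case
    by (simp add: Res_def)
next
  case (Suc q)
  obtain c A0 where A2: "A2 = insert c A0" "c \<notin> A0" "finite A0" "card A0 = q"
    using Suc.prems by (metis card_Suc_eq finite_insert)
  define L where "L = (\<Sum>B'\<in>ksubsets (Suc q) B.
    smult (Res A1 B' * Res A0 (B - B') / Res B' (B - B')) (ResX (B - B')))"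
  define R where "R = smult ((-1) ^ card A1 * Res A1 A0) (ResX A1)"
  have "poly L b = poly R b" if "b \<in> B" for b
  proof -
    have "poly L b = (\<Sum>B'\<in>ksubsets (Suc q) B.
      Res A1 B' * Res A0 (B - B') / Res B' (B - B') * poly (ResX (B - B')) b)"
      by (simp add: L_def poly_sum)
    also have "\<dots> = (\<Sum>B'\<in>ksubsets q (B - {b}).
      Res A1 (insert b B') * Res A0 (B - insert b B') / Res (insert b B') (B - insert b B')
        * poly (ResX (B - insert b B')) b)"
      using Suc.prems(1) that by (intro sum_ksubsets_containing) (simp_all add: poly_ResX_eq_0_iff)
    also have "\<dots> = (\<Sum>B'\<in>ksubsets q (B - {b}).
      (\<Prod>a\<in>A1. a - b) * (Res A1 B' * Res A0 (B - {b} - B') / Res B' (B - {b} - B')))"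
      using Suc.prems(1) that by (intro sum.cong refl Res_interpolation_summand) auto
    also have "\<dots> = (\<Prod>a\<in>A1. a - b) * Res A1 A0"
      using Suc.IH[of "B - {b}" A0] Suc.prems A2 that by (subst sum_distrib_left[symmetric]) simp
    finally show ?thesis
      by (simp add: R_def poly_ResX_swap)
  qed
  moreover have "degree L \<le> card A1"
    unfolding L_def using Suc.prems(1,2) finite_subset[OF _ Suc.prems(1)]
    by (intro degree_sum_le) (auto intro!: order.trans[OF degree_smult_le]
        simp: degree_ResX card_Diff_subset finite_ksubsets)
  moreover have "degree R \<le> card A1"
    unfolding R_def by (simp add: degree_ResX)
  ultimately have "L = R"
    using Suc.prems(2) by (intro poly_eqI_degree[of B]) auto
  then have "poly L c = poly R c"
    by simp
  moreover have "poly L c = (\<Sum>B'\<in>ksubsets (Suc q) B. Res A1 B' * Res A2 (B - B') / Res B' (B - B'))"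
    unfolding L_def poly_sum using A2 by (intro sum.cong refl) (simp add: Res_insert_left poly_ResX)
  moreover have "poly R c = Res A1 A2"
    using A2 by (simp add: R_def poly_ResX_swap Res_insert_right)
  ultimately show ?case
    by simp
qed

lemma Syl_lead_square:
  assumes "finite A" "finite B" "card A = p + q" "card B = p + q"
  shows "Syl_lead p q A B = of_nat ((p + q) choose p)"
proof -
  have "(\<Sum>B'\<in>ksubsets q B. Syl_weight A B A' B') = 1" if A': "A' \<in> ksubsets p A" for A'
  proof -
    have "finite A'"
      using A' assms(1) by (auto intro: finite_subset)
    then have "card (A - A') = q"
      using A' assms(3) by (simp add: card_Diff_subset)
    then have "(\<Sum>B'\<in>ksubsets q B. Res A' B' * Res (A - A') (B - B') / Res B' (B - B'))
        = Res A' (A - A')"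
      using A' assms by (intro sum_ksubsets_Res_interpolation) auto
    moreover have "Res A' (A - A') \<noteq> 0"
      using \<open>finite A'\<close> assms(1) by (simp add: Res_nonzero)
    moreover have "(\<Sum>B'\<in>ksubsets q B. Syl_weight A B A' B')
        = (\<Sum>B'\<in>ksubsets q B. Res A' B' * Res (A - A') (B - B') / Res B' (B - B')) / Res A' (A - A')"
      unfolding sum_divide_distrib Syl_weight_def by (simp add: ac_simps)
    ultimately show ?thesis
      by simp
  qed
  then have "Syl_lead p q A B = of_nat (card (ksubsets p A))"
    by (simp add: Syl_lead_def)
  then show ?thesis
    using assms by (simp add: n_subsets)
qed

lemma Syl_lead_card_right:
  fixes A B :: "'a::field set"
  assumes "finite A" "finite B" "card B = p + q" "card A \<ge> p + q"
  shows "Syl_lead p q A B = (-1) ^ (p * (card A - (p + q))) * of_nat ((p + q) choose p)"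
  using assms(1,4)
proof (induction "card A - (p + q)" arbitrary: A)
  case 0
  then show ?case
    using assms Syl_lead_square by simp
next
  case (Suc k)
  define c :: 'a where "c = (-1) ^ (p * Suc k) * of_nat ((p + q) choose p)"
  have "Syl p q A B = smult c (ResX B)"
  proof (rule poly_eqI_degree)
    fix a assume "a \<in> A"
    with Suc.prems(1) Suc.hyps(2) have "k = card (A - {a}) - (p + q)" "p + q \<le> card (A - {a})"
      by auto
    then have "Syl_lead p q (A - {a}) B = (-1) ^ (p * k) * of_nat ((p + q) choose p)"
      using Suc.hyps(1) Suc.prems(1) by simp
    with \<open>a \<in> A\<close> show "poly (Syl p q A B) a = poly (smult c (ResX B)) a"
      using Suc.prems assms(2)
      by (simp add: poly_Syl_at_left_point poly_ResX c_def power_add)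
  next
    show "degree (Syl p q A B) < card A" "degree (smult c (ResX B)) < card A"
      using degree_Syl_le[OF Suc.prems(1) assms(2), of p q] Suc.hyps(2) assms(3)
      by (auto simp: degree_ResX)
  qed
  then have "Syl_lead p q A B = c"
    using coeff_Syl_top[OF Suc.prems(1) assms(2), of p q] coeff_ResX_card[OF assms(2)] assms(3)
    by simp
  with Suc.hyps(2) show ?case
    by (simp add: c_def)
qed

lemma Syl_eq_smult_if_lead_eq:
  fixes A B :: "'a::field set"
  assumes "finite A" "finite B" "card B > p + q"
    and "\<And>b. b \<in> B \<Longrightarrow> Syl_lead p q A (B - {b}) = c * Syl_lead 0 (p + q) A (B - {b})"
  shows "Syl p q A B = smult c (Syl 0 (p + q) A B)"
proof (rule poly_eqI_degree)
  fix b assume "b \<in> B"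
  with assms show "poly (Syl p q A B) b = poly (smult c (Syl 0 (p + q) A B)) b"
    by (simp add: poly_Syl_at_right_point)
next
  show "degree (Syl p q A B) < card B" "degree (smult c (Syl 0 (p + q) A B)) < card B"
    using assms(3) degree_Syl_le[OF assms(1,2), of p q] degree_Syl_le[OF assms(1,2), of 0 "p + q"]
    by auto
qed

lemma Syl_lead_ratio:
  fixes A B :: "'a::field set"
  assumes "finite A" "finite B" "card A > p + q" "card B \<ge> p + q"
  shows "Syl_lead p q A B
    = (-1) ^ (p * (card A - (p + q))) * of_nat ((p + q) choose p) * Syl_lead 0 (p + q) A B"
  using assms(2,4)
proof (induction "card B - (p + q)" arbitrary: B)
  case 0
  then show ?case
    using assms(1,3) Syl_lead_card_right[of A B p q] Syl_lead_card_right[of A B 0 "p + q"] by simp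
next
  case (Suc k)
  let ?c = "(-1) ^ (p * (card A - (p + q))) * of_nat ((p + q) choose p) :: 'a"
  have "Syl_lead p q A (B - {b}) = ?c * Syl_lead 0 (p + q) A (B - {b})" if "b \<in> B" for b
  proof -
    from that Suc.prems(1) Suc.hyps(2) have "k = card (B - {b}) - (p + q)" "p + q \<le> card (B - {b})"
      by auto
    then show ?thesis
      using Suc.hyps(1) Suc.prems(1) by simp
  qed
  then have "Syl p q A B = smult ?c (Syl 0 (p + q) A B)"
    using Suc.prems(1) Suc.hyps(2) by (intro Syl_eq_smult_if_lead_eq assms(1)) auto
  then have "coeff (Syl p q A B) (p + q) = ?c * coeff (Syl 0 (p + q) A B) (p + q)"
    by simp
  then show ?case
    using coeff_Syl_top[OF assms(1) Suc.prems(1), of p q] coeff_Syl_top[OF assms(1) Suc.prems(1), of 0 "p + q"]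
    by simp
qed

theorem proposition3p3:
  fixes A B :: "'a::field set" and m n p q d :: nat
  assumes "finite A" and "finite B" and "card A = m" and "card B = n"
    and "p \<le> m" and "q \<le> n" and "d = p + q"
    and "int d \<le> min (int m - 1) (int n - 1)"
  shows "Syl p q A B = smult ((-1) ^ (p * (m - d)) * of_nat (d choose p)) (Syl 0 d A B)"
proof -
  have "card A > p + q" "card B > p + q"
    using assms(3,4,7,8) by auto
  then show ?thesis
    unfolding assms(7) assms(3)[symmetric] using assms(1,2)
    by (intro Syl_eq_smult_if_lead_eq Syl_lead_ratio) auto
qed

end
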